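(* Let $P$ be a finite $(3+1)$-free poset, $(A_1,A_2)$ a pair of chains of $P$, $H$ an unbalanced ladder of $(A_1,A_2)$, and $(A'_1,A'_2)$ the pair obtained by the ladder swap on $H$. Then $\mathbf u_{A_1}\mathbf u_{A_2}\equiv\mathbf u_{A'_1}\mathbf u_{A'_2}\pmod{I^P_H}$.
   Context: $a<_Pb$: strict order; $a\sim_Pb$: incomparable or equal. $\mathcal{U}_P=\mathbb{Z}\langle u_a:a\in P\rangle$. For a chain $C=\{c_k>_P\cdots>_Pc_1\}$, $\mathbf u_C=u_{c_k}\cdots u_{c_1}$. $I^P_H$ is the two-sided ideal generated by $u_cu_a-u_au_c$ ($a<_Pc$) and $u_cu_au_b-u_bu_cu_a$ ($a\sim_Pb$, $b\sim_Pc$, $a<_Pc$). A ladder of $(A_1,A_2)$ is a connected component of the bipartite graph on $A_1\sqcup A_2$ with edges $x$—$y$ ($x\in A_1,y\in A_2$) when $x\sim_Py$; it is unbalanced if $|H\cap A_1|\ne|H\cap A_2|$. The ladder swap on $H$ gives $A'_1=(A_1\setminus H)\cup(H\cap A_2)$ and $A'_2=(A_2\setminus H)\cup(H\cap A_1)$, which are again chains. *)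

theory Defs
  imports Main "HOL-Library.Poly_Mapping"
begin

text \<open>The finite poset P is the (finite) type 'a with its order; P = UNIV.\<close>

definition sim :: "'a::order \<Rightarrow> 'a \<Rightarrow> bool" where
  "sim a b \<longleftrightarrow> \<not> a < b \<and> \<not> b < a"

definition incomp :: "'a::order \<Rightarrow> 'a \<Rightarrow> bool" where
  "incomp a b \<longleftrightarrow> \<not> a \<le> b \<and> \<not> b \<le> a"

definition three_one_free :: "'a::order itself \<Rightarrow> bool" where
  "three_one_free TYPE('a) \<longleftrightarrow>
     \<not> (\<exists>a b c d :: 'a. a < b \<and> b < c \<and> incomp d a \<and> incomp d b \<and> incomp d c)"

definition is_chain :: "'a::order set \<Rightarrow> bool" where
  "is_chain C \<longleftrightarrow> (\<forall>x\<in>C. \<forall>y\<in>C. x \<le> y \<or> y \<le> x)"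

text \<open>Elements of the free associative algebra Z<u_a : a in P>: finitely supported
  integer functions on words.\<close>
type_synonym 'a ncpoly = "'a list \<Rightarrow>\<^sub>0 int"

definition mon :: "'a list \<Rightarrow> 'a ncpoly" where
  "mon w = Poly_Mapping.single w 1"

definition ncmult :: "'a ncpoly \<Rightarrow> 'a ncpoly \<Rightarrow> 'a ncpoly" where
  "ncmult p q = (\<Sum>v\<in>Poly_Mapping.keys p. \<Sum>w\<in>Poly_Mapping.keys q.
       Poly_Mapping.single (v @ w) (Poly_Mapping.lookup p v * Poly_Mapping.lookup q w))"

inductive_set nc_ideal :: "'a ncpoly set \<Rightarrow> 'a ncpoly set" for G where
  zero: "0 \<in> nc_ideal G"
| gen: "g \<in> G \<Longrightarrow> ncmult l (ncmult g r) \<in> nc_ideal G"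
| add: "x \<in> nc_ideal G \<Longrightarrow> y \<in> nc_ideal G \<Longrightarrow> x + y \<in> nc_ideal G"

definition IPH_gens :: "'a::order ncpoly set" where
  "IPH_gens =
     {ncmult (mon [c]) (mon [a]) - ncmult (mon [a]) (mon [c]) | a c. a < c} \<union>
     {ncmult (mon [c]) (ncmult (mon [a]) (mon [b])) - ncmult (mon [b]) (ncmult (mon [c]) (mon [a]))
       | a b c. sim a b \<and> sim b c \<and> a < c}"

definition IPH :: "'a::order ncpoly set" where
  "IPH = nc_ideal IPH_gens"

text \<open>u_C = u_{c_k} ... u_{c_1} for the chain c_k > ... > c_1.\<close>
definition chain_word :: "'a::order set \<Rightarrow> 'a list" where
  "chain_word C = (THE w. set w = C \<and> sorted_wrt (\<lambda>x y. y < x) w)"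

definition uC :: "'a::order set \<Rightarrow> 'a ncpoly" where
  "uC C = mon (chain_word C)"

definition ladder_edges :: "'a::order set \<Rightarrow> 'a set \<Rightarrow> ('a + 'a) rel" where
  "ladder_edges A1 A2 =
     {(Inl x, Inr y) | x y. x \<in> A1 \<and> y \<in> A2 \<and> sim x y} \<union>
     {(Inr y, Inl x) | x y. x \<in> A1 \<and> y \<in> A2 \<and> sim x y}"

definition is_ladder :: "'a::order set \<Rightarrow> 'a set \<Rightarrow> ('a + 'a) set \<Rightarrow> bool" where
  "is_ladder A1 A2 H \<longleftrightarrow>
     (\<exists>v \<in> A1 <+> A2. H = {w \<in> A1 <+> A2. (v, w) \<in> (ladder_edges A1 A2)\<^sup>*})"

definition left_part :: "('a + 'a) set \<Rightarrow> 'a set" where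
  "left_part H = {x. Inl x \<in> H}"

definition right_part :: "('a + 'a) set \<Rightarrow> 'a set" where
  "right_part H = {y. Inr y \<in> H}"

definition unbalanced :: "('a + 'a) set \<Rightarrow> bool" where
  "unbalanced H \<longleftrightarrow> card (left_part H) \<noteq> card (right_part H)"

definition swap1 :: "'a set \<Rightarrow> 'a set \<Rightarrow> ('a + 'a) set \<Rightarrow> 'a set" where
  "swap1 A1 A2 H = (A1 - left_part H) \<union> right_part H"

definition swap2 :: "'a set \<Rightarrow> 'a set \<Rightarrow> ('a + 'a) set \<Rightarrow> 'a set" where
  "swap2 A1 A2 H = (A2 - right_part H) \<union> left_part H"

end

theory Submission
  imports Defs
begin

text \<open>
  Both sides are monomials, and it suffices to connect the two words by the defining relations of
  \<open>I\<^sup>P\<^sub>H\<close>. Strictly comparable letters commute, so the word of a chain may be reordered at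
  will; moreover a ladder is closed under \<open>\<sim>\<close>, so the part of each chain outside the ladder
  commutes with the ladder part of the other chain. Everything thus reduces to commuting
  \<open>u\<^bsub>H\<inter>A\<^sub>1\<^esub>\<close> with \<open>u\<^bsub>H\<inter>A\<^sub>2\<^esub>\<close>.

  Say \<open>|H\<inter>A\<^sub>1| < |H\<inter>A\<^sub>2|\<close>. By connectivity of the ladder, every non-minimal \<open>y\<close> in
  \<open>H\<inter>A\<^sub>2\<close> has a partner \<open>x \<in> H\<inter>A\<^sub>1\<close> with \<open>x \<sim> y\<close> and \<open>x \<sim> p\<close>, where \<open>p\<close> is the
  predecessor of \<open>y\<close>. By \<open>(3+1)\<close>-freeness no element is \<open>\<sim>\<close> to three elements of a chain,
  so \<open>y \<mapsto> x\<close> is injective, and by counting it is onto \<open>H\<inter>A\<^sub>1\<close>. Hence each \<open>x\<close> is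
  \<open>\<sim>\<close> to exactly one consecutive pair \<open>y > p\<close> and strictly comparable to the rest of the chain,
  and the relation \<open>u\<^sub>x u\<^sub>y u\<^sub>p = u\<^sub>y u\<^sub>p u\<^sub>x\<close> together with commutations moves \<open>u\<^sub>x\<close>
  across \<open>u\<^bsub>H\<inter>A\<^sub>2\<^esub>\<close>.
\<close>

lemma ncmult_eq_sum_superset:
  assumes "finite K" "Poly_Mapping.keys p \<subseteq> K" "finite L" "Poly_Mapping.keys q \<subseteq> L"
  shows "ncmult p q = (\<Sum>v\<in>K. \<Sum>w\<in>L.
           Poly_Mapping.single (v @ w) (Poly_Mapping.lookup p v * Poly_Mapping.lookup q w))"
proof -
  have "ncmult p q = (\<Sum>v\<in>Poly_Mapping.keys p. \<Sum>w\<in>L.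
           Poly_Mapping.single (v @ w) (Poly_Mapping.lookup p v * Poly_Mapping.lookup q w))"
    unfolding ncmult_def
    by (intro sum.cong refl sum.mono_neutral_left assms) (auto simp: in_keys_iff)
  also have "\<dots> = (\<Sum>v\<in>K. \<Sum>w\<in>L.
           Poly_Mapping.single (v @ w) (Poly_Mapping.lookup p v * Poly_Mapping.lookup q w))"
    by (intro sum.mono_neutral_left assms) (auto simp: in_keys_iff)
  finally show ?thesis .
qed

lemma ncmult_add_left: "ncmult (p + p') q = ncmult p q + ncmult p' q"
  by (simp add: ncmult_eq_sum_superset[of "Poly_Mapping.keys p \<union> Poly_Mapping.keys p'" _
        "Poly_Mapping.keys q" q] keys_add lookup_add distrib_right single_add sum.distrib)

lemma ncmult_add_right: "ncmult p (q + q') = ncmult p q + ncmult p q'"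
  by (simp add: ncmult_eq_sum_superset[of "Poly_Mapping.keys p" p
        "Poly_Mapping.keys q \<union> Poly_Mapping.keys q'"] keys_add lookup_add distrib_left single_add sum.distrib)

lemma ncmult_uminus_left: "ncmult (- p) q = - ncmult p q"
  unfolding ncmult_def by (simp add: single_uminus sum_negf)

lemma ncmult_uminus_right: "ncmult p (- q) = - ncmult p q"
  unfolding ncmult_def by (simp add: single_uminus sum_negf)

lemma ncmult_diff_left: "ncmult (p - p') q = ncmult p q - ncmult p' q"
  using ncmult_add_left[of p "- p'" q] by (simp add: ncmult_uminus_left)

lemma ncmult_diff_right: "ncmult p (q - q') = ncmult p q - ncmult p q'"
  using ncmult_add_right[of p q "- q'"] by (simp add: ncmult_uminus_right)

lemma ncmult_mon: "ncmult (mon u) (mon v) = mon (u @ v)"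
  unfolding ncmult_def mon_def by simp

lemma nc_ideal_uminus: "x \<in> nc_ideal G \<Longrightarrow> - x \<in> nc_ideal G"
proof (induction rule: nc_ideal.induct)
  case (gen g l r)
  then show ?case using nc_ideal.gen[of g G "- l" r] by (simp add: ncmult_uminus_left)
next
  case (add x y)
  then show ?case using nc_ideal.add[of "- x" G "- y"] by simp
qed (simp add: nc_ideal.zero)

inductive iph_rel :: "'a::order list \<Rightarrow> 'a list \<Rightarrow> bool" where
  commute: "a < c \<Longrightarrow> iph_rel [c, a] [a, c]"
| braid: "sim a b \<Longrightarrow> sim b c \<Longrightarrow> a < c \<Longrightarrow> iph_rel [c, a, b] [b, c, a]"

definition iph_step :: "'a::order list \<Rightarrow> 'a list \<Rightarrow> bool" where
  "iph_step u v \<longleftrightarrow> (\<exists>l r s t. iph_rel s t \<and> u = l @ s @ r \<and> v = l @ t @ r)"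

abbreviation word_equiv :: "'a::order list \<Rightarrow> 'a list \<Rightarrow> bool" where
  "word_equiv \<equiv> equivclp iph_step"

lemma iph_rel_in_IPH_gens: "iph_rel s t \<Longrightarrow> mon s - mon t \<in> IPH_gens"
  by (induction rule: iph_rel.induct) (force simp: IPH_gens_def ncmult_mon)+

lemma iph_step_mon_diff: "iph_step u v \<Longrightarrow> mon u - mon v \<in> IPH"
proof -
  assume "iph_step u v"
  then obtain l r s t where st: "iph_rel s t" and uv: "u = l @ s @ r" "v = l @ t @ r"
    unfolding iph_step_def by blast
  have "ncmult (mon l) (ncmult (mon s - mon t) (mon r)) \<in> IPH"
    unfolding IPH_def by (rule nc_ideal.gen[OF iph_rel_in_IPH_gens[OF st]])
  then show ?thesis
    by (simp add: uv ncmult_diff_left ncmult_diff_right ncmult_mon)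
qed

lemma word_equiv_mon_diff: "word_equiv u v \<Longrightarrow> mon u - mon v \<in> IPH"
proof (induction rule: equivclp_induct)
  case base
  show ?case by (simp add: IPH_def nc_ideal.zero)
next
  case (step v w)
  have "mon v - mon w \<in> IPH"
    using step.hyps(2) iph_step_mon_diff nc_ideal_uminus[of "mon w - mon v" IPH_gens]
    by (auto simp: IPH_def)
  with step.IH have "(mon u - mon v) + (mon v - mon w) \<in> IPH"
    unfolding IPH_def by (rule nc_ideal.add)
  then show ?case by simp
qed

lemma iph_step_append: "iph_step u v \<Longrightarrow> iph_step (p @ u @ q) (p @ v @ q)"
proof -
  assume "iph_step u v"
  then obtain l r s t where "iph_rel s t" "u = l @ s @ r" "v = l @ t @ r"
    unfolding iph_step_def by blast
  then have "iph_rel s t \<and> p @ u @ q = (p @ l) @ s @ (r @ q) \<and> p @ v @ q = (p @ l) @ t @ (r @ q)"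
    by simp
  then show ?thesis
    unfolding iph_step_def by blast
qed

lemma word_equiv_append:
  "word_equiv u v \<Longrightarrow> word_equiv (p @ u @ q) (p @ v @ q)"
proof (induction rule: equivclp_induct)
  case (step v w)
  with iph_step_append show ?case by (blast intro: equivclp_into_equivclp)
qed simp

lemma word_equiv_append_both:
  assumes "word_equiv u u'" "word_equiv v v'"
  shows "word_equiv (u @ v) (u' @ v')"
proof -
  have "word_equiv (u @ v) (u' @ v)" using word_equiv_append[OF assms(1), of "[]" v] by simp
  also have "word_equiv (u' @ v) (u' @ v')" using word_equiv_append[OF assms(2), of u' "[]"] by simp
  finally show ?thesis .
qed

lemma iph_rel_word_equiv: "iph_rel s t \<Longrightarrow> word_equiv s t"
  unfolding iph_step_def by (intro r_into_equivclp) (metis append.left_neutral append_Nil2)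

lemma sim_refl [simp]: "sim x x"
  unfolding sim_def by simp

lemma sim_sym: "sim x y \<Longrightarrow> sim y x"
  unfolding sim_def by blast

lemma word_equiv_swap: "\<not> sim x z \<Longrightarrow> word_equiv [x, z] [z, x]"
  unfolding sim_def
  by (auto intro: iph_rel_word_equiv iph_rel.commute equivclp_sym)

lemma word_equiv_move_across:
  "\<forall>z\<in>set v. \<not> sim x z \<Longrightarrow> word_equiv (x # v) (v @ [x])"
proof (induction v)
  case (Cons z v)
  have "word_equiv (x # z # v) (z # x # v)"
    using word_equiv_append[OF word_equiv_swap, of x z "[]" v] Cons.prems by simp
  also have "word_equiv (z # x # v) (z # v @ [x])"
    using word_equiv_append[of "x # v" "v @ [x]" "[z]" "[]"] Cons by simp
  finally show ?case by simp
qed simp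

lemma word_equiv_commute_words:
  "\<forall>x\<in>set X. word_equiv (x # Y) (Y @ [x]) \<Longrightarrow> word_equiv (X @ Y) (Y @ X)"
proof (induction X)
  case (Cons x X)
  have "word_equiv (x # X @ Y) (x # Y @ X)"
    using word_equiv_append[of "X @ Y" "Y @ X" "[x]" "[]"] Cons by simp
  also have "word_equiv (x # Y @ X) (Y @ x # X)"
    using word_equiv_append[of "x # Y" "Y @ [x]" "[]" X] Cons.prems by simp
  finally show ?case by simp
qed simp

lemma word_equiv_move_across_braid:
  assumes "\<forall>z\<in>set P \<union> set S. \<not> sim x z" "sim a x" "sim x c" "a < c"
  shows "word_equiv (x # P @ [c, a] @ S) (P @ [c, a] @ S @ [x])"
proof -
  have braid: "iph_rel [c, a, x] [x, c, a]"
    using assms(2-4) by (rule iph_rel.braid)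
  have "word_equiv (x # P @ [c, a] @ S) (P @ [x, c, a] @ S)"
    using word_equiv_append[OF word_equiv_move_across, of P x "[]" "[c, a] @ S"] assms(1) by simp
  also have "word_equiv (P @ [x, c, a] @ S) (P @ [c, a, x] @ S)"
    by (rule word_equiv_append[OF equivclp_sym[OF iph_rel_word_equiv[OF braid]]])
  also have "word_equiv (P @ [c, a, x] @ S) (P @ [c, a] @ S @ [x])"
    using word_equiv_append[OF word_equiv_move_across, of S x "P @ [c, a]" "[]"] assms(1) by simp
  finally show ?thesis .
qed

lemma is_chain_subset: "is_chain C \<Longrightarrow> D \<subseteq> C \<Longrightarrow> is_chain D"
  unfolding is_chain_def by blast

lemma chain_not_sim: "is_chain C \<Longrightarrow> a \<in> C \<Longrightarrow> b \<in> C \<Longrightarrow> a \<noteq> b \<Longrightarrow> \<not> sim a b"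
  unfolding is_chain_def sim_def using order.order_iff_strict by blast

lemma is_chain_Un:
  assumes "is_chain C" "is_chain D" "\<forall>x\<in>C. \<forall>y\<in>D. \<not> sim x y"
  shows "is_chain (C \<union> D)"
  using assms unfolding is_chain_def sim_def by (metis Un_iff less_imp_le)

lemma word_equiv_reorder_chain:
  "distinct v \<Longrightarrow> distinct v' \<Longrightarrow> set v = set v' \<Longrightarrow> is_chain (set v) \<Longrightarrow> word_equiv v v'"
proof (induction v' arbitrary: v)
  case (Cons x r)
  have "x \<in> set v" using Cons.prems(3) by simp
  then obtain p q where v: "v = p @ x # q" by (meson split_list)
  have "\<forall>z\<in>set p. \<not> sim x z"
    using Cons.prems(1,4) v chain_not_sim[of "set v" x] by auto
  then have "word_equiv (x # p) (p @ [x])"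
    by (rule word_equiv_move_across)
  then have "word_equiv v (x # p @ q)"
    using word_equiv_append[of "x # p" "p @ [x]" "[]" q] v by (simp add: equivclp_sym)
  moreover have "word_equiv (p @ q) r"
    using Cons.prems v by (intro Cons.IH) (auto intro: is_chain_subset)
  then have "word_equiv (x # p @ q) (x # r)"
    using word_equiv_append[of "p @ q" r "[x]" "[]"] by simp
  ultimately show ?case by (rule equivclp_trans)
qed simp

lemma chain_has_greatest:
  assumes "finite C" "C \<noteq> {}" "is_chain C"
  shows "\<exists>m\<in>C. \<forall>z\<in>C. z \<le> m"
proof -
  obtain m where "m \<in> C" "\<forall>z\<in>C. m \<le> z \<longrightarrow> m = z"
    using finite_has_maximal[OF assms(1,2)] by blast
  with assms(3) show ?thesis unfolding is_chain_def by fastforce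
qed

lemma chain_has_least:
  assumes "finite C" "C \<noteq> {}" "is_chain C"
  shows "\<exists>m\<in>C. \<forall>z\<in>C. m \<le> z"
proof -
  obtain m where "m \<in> C" "\<forall>z\<in>C. z \<le> m \<longrightarrow> m = z"
    using finite_has_minimal[OF assms(1,2)] by blast
  with assms(3) show ?thesis unfolding is_chain_def by fastforce
qed

lemma chain_decreasing_list_exists:
  "finite C \<Longrightarrow> is_chain C \<Longrightarrow> \<exists>w. set w = C \<and> sorted_wrt (>) w"
proof (induction "card C" arbitrary: C)
  case (Suc n)
  then have "C \<noteq> {}" by auto
  then obtain m where m: "m \<in> C" "\<forall>z\<in>C. z \<le> m"
    using chain_has_greatest Suc.prems by blast
  have "n = card (C - {m})" "is_chain (C - {m})"
    using Suc.hyps(2) Suc.prems m(1) is_chain_subset[OF Suc.prems(2), of "C - {m}"] by auto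
  then obtain w where "set w = C - {m}" "sorted_wrt (>) w"
    using Suc.hyps(1) Suc.prems(1) by blast
  then have "set (m # w) = C \<and> sorted_wrt (>) (m # w)"
    using m by (auto simp: order.order_iff_strict)
  then show ?case by blast
qed simp

lemma decreasing_list_unique:
  "sorted_wrt (>) w \<Longrightarrow> sorted_wrt (>) v \<Longrightarrow> set w = set v \<Longrightarrow> w = (v :: 'a::order list)"
proof (induction w arbitrary: v)
  case (Cons a w)
  then obtain b v' where v: "v = b # v'" by (cases v) auto
  have "a = b"
  proof (rule ccontr)
    assume "a \<noteq> b"
    then have "a \<in> set v'" "b \<in> set w" using Cons.prems(3) v by auto
    then have "a < b" "b < a" using Cons.prems(1,2) v by auto
    then show False by simp
  qed
  moreover have "set w = set v'"
  proof -
    have "a \<notin> set w" "b \<notin> set v'" using Cons.prems(1,2) v by auto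
    then show ?thesis using Cons.prems(3) v \<open>a = b\<close> by auto
  qed
  ultimately show ?case using Cons.IH Cons.prems(1,2) v by simp
qed simp

lemma chain_word:
  assumes "finite C" "is_chain C"
  shows "set (chain_word C) = C" "sorted_wrt (>) (chain_word C)" "distinct (chain_word C)"
proof -
  obtain w where w: "set w = C" "sorted_wrt (>) w"
    using chain_decreasing_list_exists assms by blast
  have "chain_word C = w"
    unfolding chain_word_def by (rule the_equality) (use w decreasing_list_unique in auto)
  moreover have "distinct w"
    using w(2) by (induction w) auto
  ultimately show "set (chain_word C) = C" "sorted_wrt (>) (chain_word C)" "distinct (chain_word C)"
    using w by simp_all
qed

lemma word_equiv_chain_word_Un:
  assumes "finite C" "finite D" "is_chain (C \<union> D)" "C \<inter> D = {}"
  shows "word_equiv (chain_word (C \<union> D)) (chain_word C @ chain_word D)"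
proof -
  have "is_chain C" "is_chain D" using is_chain_subset[OF assms(3)] by auto
  then show ?thesis
    using assms chain_word[of "C \<union> D"] chain_word[of C] chain_word[of D]
    by (intro word_equiv_reorder_chain) auto
qed

lemma word_equiv_exchange_blocks:
  fixes A1 A2 H1 H2 :: "'a::order set"
  assumes "finite A1" "finite A2" "is_chain A1" "is_chain A2" "H1 \<subseteq> A1" "H2 \<subseteq> A2"
    and unrelated1: "\<forall>x\<in>A1 - H1. \<forall>y\<in>H2. \<not> sim x y"
    and unrelated2: "\<forall>x\<in>H1. \<forall>y\<in>A2 - H2. \<not> sim x y"
    and commute: "word_equiv (chain_word H1 @ chain_word H2) (chain_word H2 @ chain_word H1)"
  shows "word_equiv (chain_word A1 @ chain_word A2)
           (chain_word ((A1 - H1) \<union> H2) @ chain_word ((A2 - H2) \<union> H1))"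
proof -
  define D1 D2 where "D1 = A1 - H1" and "D2 = A2 - H2"
  have fin: "finite D1" "finite D2" "finite H1" "finite H2"
    using assms(1,2,5,6) finite_subset unfolding D1_def D2_def by auto
  have chains: "is_chain D1" "is_chain D2" "is_chain H1" "is_chain H2"
    using is_chain_subset assms(3-6) unfolding D1_def D2_def by blast+
  have "(A1 - H1) \<inter> H1 = {}" by blast
  then have "word_equiv (chain_word A1) (chain_word D1 @ chain_word H1)"
    using word_equiv_chain_word_Un[OF fin(1,3)] assms(3,5) unfolding D1_def
    by (simp add: Un_absorb2)
  moreover have "word_equiv (chain_word A2) (chain_word H2 @ chain_word D2)"
    using word_equiv_chain_word_Un[OF fin(4,2)] assms(4,6) unfolding D2_def
    by (simp add: Un_absorb1)
  ultimately have "word_equiv (chain_word A1 @ chain_word A2)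
      (chain_word D1 @ (chain_word H1 @ chain_word H2) @ chain_word D2)"
    using word_equiv_append_both by fastforce
  also have "word_equiv \<dots> (chain_word D1 @ (chain_word H2 @ chain_word H1) @ chain_word D2)"
    using commute by (rule word_equiv_append)
  also have "word_equiv \<dots> (chain_word (D1 \<union> H2) @ chain_word (H1 \<union> D2))"
  proof -
    have "D1 \<inter> H2 = {}" "H1 \<inter> D2 = {}"
      using unrelated1 unrelated2 unfolding D1_def D2_def by (metis disjoint_iff sim_refl)+
    moreover have "is_chain (D1 \<union> H2)" "is_chain (H1 \<union> D2)"
      using unrelated1 unrelated2 chains unfolding D1_def D2_def by (auto intro: is_chain_Un)
    ultimately have "word_equiv (chain_word (D1 \<union> H2) @ chain_word (H1 \<union> D2))
        (chain_word D1 @ (chain_word H2 @ chain_word H1) @ chain_word D2)"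
      using word_equiv_append_both[OF word_equiv_chain_word_Un[of D1 H2] word_equiv_chain_word_Un[of H1 D2]]
        fin by simp
    then show ?thesis by (rule equivclp_sym)
  qed
  finally show ?thesis unfolding D1_def D2_def by (simp add: Un_commute)
qed

lemma three_one_free_sim_chain:
  assumes "three_one_free TYPE('a::order)" "is_chain C"
    and "{a, b, c} \<subseteq> C" "distinct [a, b, c]"
    and "sim x a" "sim x b" "sim (x::'a) c"
  shows False
proof -
  let ?D = "{a, b, c}"
  have D: "is_chain ?D" "finite ?D" using is_chain_subset[OF assms(2,3)] by auto
  have "length (chain_word ?D) = 3"
    using chain_word[OF D(2,1)] assms(4) distinct_card by fastforce
  then obtain z2 z1 z0 where w: "chain_word ?D = [z2, z1, z0]"
    by (auto simp: numeral_3_eq_3 length_Suc_conv)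
  then have "z0 < z1" "z1 < z2" "z0 \<in> ?D" "z1 \<in> ?D" "z2 \<in> ?D"
    using chain_word[OF D(2,1)] by auto
  have sim_D: "sim x z" if "z \<in> ?D" for z using that assms(5-7) by auto
  have "x \<notin> ?D"
  proof
    assume "x \<in> ?D"
    have "a \<noteq> x \<or> b \<noteq> x" using assms(4) by auto
    then obtain z where "z \<in> ?D" "z \<noteq> x" by blast
    then show False using sim_D chain_not_sim[OF D(1)] \<open>x \<in> ?D\<close> by blast
  qed
  then have "incomp x z" if "z \<in> ?D" for z
    using that sim_D[OF that] unfolding sim_def incomp_def by (auto simp: order.order_iff_strict)
  then show False
    using assms(1) \<open>z0 < z1\<close> \<open>z1 < z2\<close> \<open>z0 \<in> ?D\<close> \<open>z1 \<in> ?D\<close> \<open>z2 \<in> ?D\<close>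
    unfolding three_one_free_def by blast
qed

lemma sim_between: "a \<le> b \<Longrightarrow> b \<le> c \<Longrightarrow> sim x a \<Longrightarrow> sim x c \<Longrightarrow> sim x b"
  unfolding sim_def by (meson order_less_le_trans order_le_less_trans)

definition chain_pred :: "'a::order set \<Rightarrow> 'a \<Rightarrow> 'a \<Rightarrow> bool" where
  "chain_pred C p y \<longleftrightarrow> p \<in> C \<and> y \<in> C \<and> p < y \<and> (\<forall>z\<in>C. z < y \<longrightarrow> z \<le> p)"

lemma chain_pred_exists:
  assumes "finite C" "is_chain C" "y \<in> C" "z \<in> C" "z < y"
  shows "\<exists>p. chain_pred C p y"
proof -
  obtain p where "p \<in> {z \<in> C. z < y}" "\<forall>z\<in>{z \<in> C. z < y}. z \<le> p"
    using chain_has_greatest[of "{z \<in> C. z < y}"] is_chain_subset[OF assms(2), of "{z \<in> C. z < y}"]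
      assms(1,4,5) by auto
  then show ?thesis unfolding chain_pred_def using assms(3) by auto
qed

lemma decreasing_list_split_at_pred:
  "sorted_wrt (>) w \<Longrightarrow> chain_pred (set w) a c \<Longrightarrow> \<exists>P S. w = P @ [c, a] @ S"
proof (induction w)
  case (Cons h t)
  note pred = Cons.prems(2)[unfolded chain_pred_def]
  show ?case
  proof (cases "h = c")
    case True
    then obtain h' t' where t: "t = h' # t'" using pred by (cases t) auto
    have "h' \<le> a" "a \<le> h'"
      using Cons.prems(1) pred True t by (auto simp: order.order_iff_strict)
    then have "h # t = [] @ [c, a] @ t'" using True t by simp
    then show ?thesis by blast
  next
    case False
    have "a \<noteq> h" using Cons.prems(1) pred False by auto
    then have "chain_pred (set t) a c" using pred False unfolding chain_pred_def by auto
    then obtain P S where "t = P @ [c, a] @ S" using Cons.IH Cons.prems(1) by auto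
    then have "h # t = (h # P) @ [c, a] @ S" by simp
    then show ?thesis by blast
  qed
qed (simp add: chain_pred_def)

text \<open>Connectivity of the bipartite graph of \<open>\<sim>\<close> between \<open>H1\<close> and \<open>H2\<close>, phrased without paths:
  every \<open>\<sim>\<close>-closed pair of subsets is trivial.\<close>
definition sim_connected :: "'a::order set \<Rightarrow> 'a set \<Rightarrow> bool" where
  "sim_connected H1 H2 \<longleftrightarrow> (\<forall>S1 S2. S1 \<subseteq> H1 \<longrightarrow> S2 \<subseteq> H2 \<longrightarrow>
     (\<forall>x\<in>H1. \<forall>y\<in>H2. sim x y \<longrightarrow> (x \<in> S1 \<longleftrightarrow> y \<in> S2)) \<longrightarrow>
     (S1 = {} \<and> S2 = {}) \<or> (S1 = H1 \<and> S2 = H2))"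

lemma sim_connected_sym:
  assumes "sim_connected H1 H2"
  shows "sim_connected H2 H1"
  unfolding sim_connected_def
proof (intro allI impI)
  fix T2 T1 assume "T2 \<subseteq> H2" "T1 \<subseteq> H1"
    and closed: "\<forall>y\<in>H2. \<forall>x\<in>H1. sim y x \<longrightarrow> (y \<in> T2 \<longleftrightarrow> x \<in> T1)"
  moreover have "\<forall>x\<in>H1. \<forall>y\<in>H2. sim x y \<longrightarrow> (x \<in> T1 \<longleftrightarrow> y \<in> T2)"
    using closed sim_sym by blast
  ultimately show "(T2 = {} \<and> T1 = {}) \<or> (T2 = H2 \<and> T1 = H1)"
    using assms unfolding sim_connected_def by blast
qed

lemma sim_connected_bridges_pred:
  assumes conn: "sim_connected H1 H2" and "is_chain H2" "chain_pred H2 p y"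
  shows "\<exists>x\<in>H1. sim x p \<and> sim x y"
proof (rule ccontr)
  assume no_bridge: "\<not> ?thesis"
  note pred = assms(3)[unfolded chain_pred_def]
  define S2 where "S2 = {z \<in> H2. z \<le> p}"
  define S1 where "S1 = {x \<in> H1. \<exists>z\<in>S2. sim x z}"
  have "x \<in> S1 \<longleftrightarrow> z \<in> S2" if "x \<in> H1" "z \<in> H2" "sim x z" for x z
  proof
    assume "x \<in> S1"
    then obtain z' where z': "z' \<in> H2" "z' \<le> p" "sim x z'" unfolding S1_def S2_def by blast
    show "z \<in> S2"
    proof (rule ccontr)
      assume "z \<notin> S2"
      then have "\<not> z \<le> p" using that(2) unfolding S2_def by blast
      moreover have "z \<le> p \<or> p \<le> z" "z \<le> y \<or> y \<le> z"
        using \<open>is_chain H2\<close> that(2) pred unfolding is_chain_def by blast+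
      ultimately have "p \<le> z" "y \<le> z"
        using pred that(2) by (auto simp: order.order_iff_strict)
      have "z' \<le> y" using order.trans[OF z'(2) less_imp_le] pred by blast
      have "sim x p" "sim x y"
        using sim_between[OF z'(2) \<open>p \<le> z\<close> z'(3) that(3)]
          sim_between[OF \<open>z' \<le> y\<close> \<open>y \<le> z\<close> z'(3) that(3)] by auto
      then show False using no_bridge that(1) by blast
    qed
  qed (use that in \<open>auto simp: S1_def\<close>)
  moreover have "S1 \<subseteq> H1" "S2 \<subseteq> H2" unfolding S1_def S2_def by auto
  ultimately have "(S1 = {} \<and> S2 = {}) \<or> (S1 = H1 \<and> S2 = H2)"
    using conn unfolding sim_connected_def by blast
  moreover have "p \<in> S2" "y \<notin> S2" using pred unfolding S2_def by auto
  ultimately show False using pred by blast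
qed

text \<open>An element is \<open>\<sim>\<close> to at most two elements of a chain, so it bridges at most one
  consecutive pair.\<close>
lemma sim_pred_pair_unique:
  assumes "three_one_free TYPE('a::order)" "is_chain C"
    and "chain_pred C p y" "sim x p" "sim x y"
    and "chain_pred C p' y'" "sim x p'" "sim (x::'a) y'"
  shows "y = y'"
proof (rule ccontr)
  assume "y \<noteq> y'"
  have in_C: "{p, y, p', y'} \<subseteq> C" and "p < y" "p' < y'"
    using assms(3,6) unfolding chain_pred_def by auto
  show False
  proof (cases "p = y'")
    case True
    then have "distinct [y, y', p']" using \<open>y \<noteq> y'\<close> \<open>p < y\<close> \<open>p' < y'\<close> by auto
    then show False using three_one_free_sim_chain[OF assms(1,2)] in_C assms(5,7,8) by blast
  next
    case False
    then have "distinct [y, y', p]" using \<open>y \<noteq> y'\<close> \<open>p < y\<close> by auto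
    then show False using three_one_free_sim_chain[OF assms(1,2)] in_C assms(4,5,8) by blast
  qed
qed

lemma sim_pred_pair_of_card_less:
  assumes tof: "three_one_free TYPE('a::order)"
    and "finite H1" "finite H2" "is_chain H2" "sim_connected H1 H2"
    and "card H1 < card H2" "x \<in> H1"
  shows "\<exists>p y. chain_pred H2 p y \<and> sim x p \<and> sim (x::'a) y"
proof -
  define bridges where "bridges y x' \<longleftrightarrow> x' \<in> H1 \<and> (\<exists>p. chain_pred H2 p y \<and> sim x' p \<and> sim x' y)"
    for y x'
  have "H2 \<noteq> {}" using assms(6) by auto
  then obtain M where M: "M \<in> H2" "\<forall>z\<in>H2. M \<le> z"
    using chain_has_least assms(3,4) by blast
  define g where "g y = (SOME x'. bridges y x')" for y
  have g: "bridges y (g y)" if y: "y \<in> H2 - {M}" for y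
  proof -
    have "M < y" using y M by (auto simp: order.order_iff_strict)
    then obtain p where "chain_pred H2 p y"
      using chain_pred_exists[OF assms(3,4), of y M] y M(1) by blast
    then have "\<exists>x'. bridges y x'"
      using sim_connected_bridges_pred[OF assms(5,4)] unfolding bridges_def by blast
    then show ?thesis unfolding g_def by (rule someI_ex)
  qed
  have "inj_on g (H2 - {M})"
  proof (rule inj_onI)
    fix y y' assume y: "y \<in> H2 - {M}" and y': "y' \<in> H2 - {M}" and eq: "g y = g y'"
    obtain p where "chain_pred H2 p y" "sim (g y) p" "sim (g y) y"
      using g[OF y] unfolding bridges_def by blast
    moreover obtain p' where "chain_pred H2 p' y'" "sim (g y) p'" "sim (g y) y'"
      using g[OF y'] unfolding bridges_def eq[symmetric] by blast
    ultimately show "y = y'" by (rule sim_pred_pair_unique[OF tof assms(4)])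
  qed
  then have "card (g ` (H2 - {M})) = card H2 - 1" using M(1) by (simp add: card_image)
  then have "card H1 \<le> card (g ` (H2 - {M}))" using assms(6) by linarith
  moreover have "g ` (H2 - {M}) \<subseteq> H1" using g unfolding bridges_def by blast
  ultimately have "g ` (H2 - {M}) = H1"
    using card_seteq[OF assms(2)] by blast
  then obtain y where "y \<in> H2 - {M}" "x = g y" using assms(7) by blast
  then show ?thesis using g unfolding bridges_def by blast
qed

lemma word_equiv_chain_words_commute_of_card_less:
  assumes tof: "three_one_free TYPE('a::order)"
    and "finite H1" "finite H2" "is_chain H1" "is_chain H2" "sim_connected H1 H2"
    and "card H1 < card H2"
  shows "word_equiv (chain_word H1 @ chain_word H2) (chain_word H2 @ chain_word (H1::'a set))"
proof (rule word_equiv_commute_words, rule ballI)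
  fix x assume "x \<in> set (chain_word H1)"
  then have "x \<in> H1" using chain_word(1)[OF assms(2,4)] by simp
  then obtain p y where py: "chain_pred H2 p y" "sim x p" "sim x y"
    using sim_pred_pair_of_card_less[OF tof assms(2,3,5,6,7)] by blast
  note w = chain_word[OF assms(3,5)]
  obtain P S where PS: "chain_word H2 = P @ [y, p] @ S"
    using decreasing_list_split_at_pred[OF w(2), unfolded w(1)] py(1) by blast
  have "\<not> sim x z" if "z \<in> set P \<union> set S" for z
  proof
    assume "sim x z"
    moreover have "distinct [y, p, z]" "{y, p, z} \<subseteq> H2"
      using that w(1,3) PS by auto
    ultimately show False
      using three_one_free_sim_chain[OF tof assms(5)] py by blast
  qed
  moreover have "p < y" using py(1) unfolding chain_pred_def by simp
  ultimately have "word_equiv (x # P @ [y, p] @ S) (P @ [y, p] @ S @ [x])"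
    using py(2,3) by (intro word_equiv_move_across_braid) (auto intro: sim_sym)
  then show "word_equiv (x # chain_word H2) (chain_word H2 @ [x])"
    unfolding PS by simp
qed

lemma word_equiv_chain_words_commute:
  assumes "three_one_free TYPE('a::order)"
    and "finite H1" "finite H2" "is_chain H1" "is_chain H2" "sim_connected H1 H2"
    and "card H1 \<noteq> card H2"
  shows "word_equiv (chain_word H1 @ chain_word H2) (chain_word H2 @ chain_word (H1::'a set))"
proof (cases "card H1 < card H2")
  case True
  then show ?thesis using word_equiv_chain_words_commute_of_card_less assms by blast
next
  case False
  then have "card H2 < card H1" using assms(7) by linarith
  from word_equiv_chain_words_commute_of_card_less[OF assms(1,3,2,5,4) sim_connected_sym[OF assms(6)] this]
  show ?thesis by (rule equivclp_sym)
qed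

lemma ladder_edge_closed:
  assumes "is_ladder A1 A2 H" "w \<in> H" "(w, w') \<in> ladder_edges A1 A2"
  shows "w' \<in> H"
  using assms unfolding is_ladder_def ladder_edges_def by (auto intro: rtrancl_into_rtrancl)

lemma ladder_parts_subset:
  assumes "is_ladder A1 A2 H"
  shows "left_part H \<subseteq> A1" "right_part H \<subseteq> A2"
  using assms unfolding is_ladder_def left_part_def right_part_def by auto

lemma ladder_sim_closed:
  assumes "is_ladder A1 A2 H" "x \<in> A1" "y \<in> A2" "sim x y"
  shows "x \<in> left_part H \<longleftrightarrow> y \<in> right_part H"
proof -
  have "(Inl x, Inr y) \<in> ladder_edges A1 A2" "(Inr y, Inl x) \<in> ladder_edges A1 A2"
    using assms(2-4) unfolding ladder_edges_def by auto
  then show ?thesis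
    using ladder_edge_closed[OF assms(1)] unfolding left_part_def right_part_def by blast
qed

lemma ladder_edge_invariant_const:
  assumes ladder: "is_ladder A1 A2 H"
    and invariant: "\<And>w w'. w \<in> H \<Longrightarrow> (w, w') \<in> ladder_edges A1 A2 \<Longrightarrow> f w' = f w"
    and "w \<in> H" "w' \<in> H"
  shows "f w = f w'"
proof -
  obtain v where H: "H = {w \<in> A1 <+> A2. (v, w) \<in> (ladder_edges A1 A2)\<^sup>*}"
    using ladder unfolding is_ladder_def by blast
  have const: "f u = f v" if "(v, u) \<in> (ladder_edges A1 A2)\<^sup>*" for u
    using that
  proof (induction rule: rtrancl_induct)
    case (step u u')
    then have "u \<in> H" using H unfolding ladder_edges_def by blast
    with step.hyps(2) step.IH show ?case using invariant by metis
  qed simp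
  have reach: "(v, w) \<in> (ladder_edges A1 A2)\<^sup>*" "(v, w') \<in> (ladder_edges A1 A2)\<^sup>*"
    using assms(3,4) unfolding H by simp_all
  show ?thesis using const[OF reach(1)] const[OF reach(2)] by simp
qed

lemma ladder_sim_connected:
  assumes ladder: "is_ladder A1 A2 H"
  shows "sim_connected (left_part H) (right_part H)"
  unfolding sim_connected_def
proof (intro allI impI)
  fix S1 S2
  assume S: "S1 \<subseteq> left_part H" "S2 \<subseteq> right_part H"
    and closed: "\<forall>x\<in>left_part H. \<forall>y\<in>right_part H. sim x y \<longrightarrow> (x \<in> S1 \<longleftrightarrow> y \<in> S2)"
  define f where "f w = (case w of Inl x \<Rightarrow> x \<in> S1 | Inr y \<Rightarrow> y \<in> S2)" for w
  have f_simps: "f (Inl x) \<longleftrightarrow> x \<in> S1" "f (Inr y) \<longleftrightarrow> y \<in> S2" for x y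
    unfolding f_def by simp_all
  have "f w' = f w" if "w \<in> H" "(w, w') \<in> ladder_edges A1 A2" for w w'
  proof -
    have "w' \<in> H" using ladder_edge_closed[OF ladder that] .
    with that closed show ?thesis
      unfolding ladder_edges_def left_part_def right_part_def by (auto simp: f_simps)
  qed
  then have f_const: "f w = f w'" if "w \<in> H" "w' \<in> H" for w w'
    using ladder_edge_invariant_const[OF ladder] that by blast
  show "(S1 = {} \<and> S2 = {}) \<or> (S1 = left_part H \<and> S2 = right_part H)"
  proof (cases "\<exists>w\<in>H. f w")
    case True
    then obtain w where "w \<in> H" "f w" by blast
    then have "f u" if "u \<in> H" for u using f_const that by blast
    then have "left_part H \<subseteq> S1" "right_part H \<subseteq> S2"
      unfolding left_part_def right_part_def using f_simps by blast+
    then show ?thesis using S by blast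
  next
    case False
    then have "left_part H \<inter> S1 = {}" "right_part H \<inter> S2 = {}"
      unfolding left_part_def right_part_def using f_simps by blast+
    then show ?thesis using S by blast
  qed
qed

theorem mainTheorem19:
  fixes A1 A2 :: "('a::{finite,order}) set" and H :: "('a + 'a) set"
  assumes "three_one_free TYPE('a)"
    and "is_chain A1" and "is_chain A2"
    and "is_ladder A1 A2 H"
    and "unbalanced H"
  shows "ncmult (uC A1) (uC A2) - ncmult (uC (swap1 A1 A2 H)) (uC (swap2 A1 A2 H)) \<in> IPH"
proof -
  let ?H1 = "left_part H" and ?H2 = "right_part H"
  have sub: "?H1 \<subseteq> A1" "?H2 \<subseteq> A2" using ladder_parts_subset[OF assms(4)] .
  have "word_equiv (chain_word ?H1 @ chain_word ?H2) (chain_word ?H2 @ chain_word ?H1)"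
    using assms(5) unfolding unbalanced_def
    by (intro word_equiv_chain_words_commute assms(1) ladder_sim_connected[OF assms(4)]
        is_chain_subset[OF assms(2) sub(1)] is_chain_subset[OF assms(3) sub(2)]) simp_all
  moreover have "\<forall>x\<in>A1 - ?H1. \<forall>y\<in>?H2. \<not> sim x y" "\<forall>x\<in>?H1. \<forall>y\<in>A2 - ?H2. \<not> sim x y"
    using ladder_sim_closed[OF assms(4)] sub by blast+
  ultimately have "word_equiv (chain_word A1 @ chain_word A2)
      (chain_word (swap1 A1 A2 H) @ chain_word (swap2 A1 A2 H))"
    unfolding swap1_def swap2_def using assms(2,3) sub by (intro word_equiv_exchange_blocks) simp_all
  then show ?thesis
    unfolding uC_def ncmult_mon by (rule word_equiv_mon_diff)
qed

end
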